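(* Let $(p_m)$ and $(q_n)$ belong to $SVA_{reg(\alpha)}$ (for some $\alpha\ge0$), and let $(u_{mn})$ be a double sequence of complex numbers that is $(\overline{N},p,q)$ summable to a number $\ell$. If $$\frac{P_m}{p_m}\Delta_{10}u_{mn}=O(1)\quad\text{and}\quad\frac{Q_n}{q_n}\Delta_{01}u_{mn}=O(1),$$ then $(u_{mn})$ is $P$-convergent to $\ell$.
   Context: Weights: $(p_m)_{m\ge0},(q_n)_{n\ge0}$ are sequences of positive reals with $P_m=\sum_{i=0}^m p_i\to\infty$ and $Q_n=\sum_{j=0}^n q_j\to\infty$. $SVA_{reg(\alpha)}$ denotes the set of positive sequences $(p_m)$ whose partial sums have the form $P_m=(m+1)^{\alpha}L(m)$ ($m\ge0$) with a constant $\alpha\ge0$ and a slowly varying function $L$ on $(0,\infty)$, i.e. $L$ positive, measurable, and $L(\lambda t)/L(t)\to1$ as $t\to\infty$ for every $\lambda>0$. The weighted means are $\sigma_{mn}=\frac{1}{P_mQ_n}\sum_{i=0}^m\sum_{j=0}^n p_iq_ju_{ij}$; $(u_{mn})$ is $(\overline{N},p,q)$ summable to $\ell$ if $(\sigma_{mn})$ is $P$-convergent to $\ell$. A double sequence $(a_{mn})$ is $P$-convergent to $\ell$ if for every $\epsilon>0$ there is $n_0$ with $|a_{mn}-\ell|<\epsilon$ whenever $m,n\ge n_0$. $\Delta_{10}u_{mn}=u_{mn}-u_{m-1,n}$ and $\Delta_{01}u_{mn}=u_{mn}-u_{m,n-1}$. For a double array, $a_{mn}=O(1)$ means there exist constants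 $H>0$ and $n_0$ such that $|a_{mn}|\le H$ for all $m,n\ge n_0$. *)

theory Defs
  imports "HOL-Analysis.Analysis"
begin

definition psum :: "(nat \<Rightarrow> real) \<Rightarrow> nat \<Rightarrow> real" where
  "psum p m = (\<Sum>i\<le>m. p i)"

definition slowly_varying :: "(real \<Rightarrow> real) \<Rightarrow> bool" where
  "slowly_varying L \<longleftrightarrow>
     (\<forall>t>0. L t > 0) \<and>
     L \<in> borel_measurable (restrict_space borel {0<..}) \<and>
     (\<forall>c>0. ((\<lambda>t. L (c * t) / L t) \<longlongrightarrow> 1) at_top)"

definition weight_seq :: "(nat \<Rightarrow> real) \<Rightarrow> bool" where
  "weight_seq p \<longleftrightarrow> (\<forall>m. p m > 0) \<and> filterlim (psum p) at_top sequentially"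

definition SVA_reg :: "real \<Rightarrow> (nat \<Rightarrow> real) set" where
  "SVA_reg \<alpha> = {p. (\<forall>m. p m > 0) \<and>
     (\<exists>L. slowly_varying L \<and> (\<forall>m. psum p m = (real m + 1) powr \<alpha> * L (real m)))}"

definition wmean :: "(nat \<Rightarrow> real) \<Rightarrow> (nat \<Rightarrow> real) \<Rightarrow> (nat \<Rightarrow> nat \<Rightarrow> complex) \<Rightarrow> nat \<Rightarrow> nat \<Rightarrow> complex" where
  "wmean p q u m n = (\<Sum>i\<le>m. \<Sum>j\<le>n. of_real (p i * q j) * u i j) / of_real (psum p m * psum q n)"

definition P_conv :: "(nat \<Rightarrow> nat \<Rightarrow> complex) \<Rightarrow> complex \<Rightarrow> bool" where
  "P_conv a l \<longleftrightarrow> (\<forall>\<epsilon>>0. \<exists>n0. \<forall>m n. m \<ge> n0 \<and> n \<ge> n0 \<longrightarrow> norm (a m n - l) < \<epsilon>)"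

definition Nbar_summable :: "(nat \<Rightarrow> real) \<Rightarrow> (nat \<Rightarrow> real) \<Rightarrow> (nat \<Rightarrow> nat \<Rightarrow> complex) \<Rightarrow> complex \<Rightarrow> bool" where
  "Nbar_summable p q u l \<longleftrightarrow> P_conv (wmean p q u) l"

definition double_bigO1 :: "(nat \<Rightarrow> nat \<Rightarrow> complex) \<Rightarrow> bool" where
  "double_bigO1 a \<longleftrightarrow> (\<exists>H>0. \<exists>n0. \<forall>m n. m \<ge> n0 \<and> n \<ge> n0 \<longrightarrow> norm (a m n) \<le> H)"

definition Delta10 :: "(nat \<Rightarrow> nat \<Rightarrow> complex) \<Rightarrow> nat \<Rightarrow> nat \<Rightarrow> complex" where
  "Delta10 u m n = u m n - (if m = 0 then 0 else u (m - 1) n)"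

definition Delta01 :: "(nat \<Rightarrow> nat \<Rightarrow> complex) \<Rightarrow> nat \<Rightarrow> nat \<Rightarrow> complex" where
  "Delta01 u m n = u m n - (if n = 0 then 0 else u m (n - 1))"

end

theory Submission
  imports Defs
begin

text \<open>
  The Tauberian conditions bound a single row or column step by \<open>H p\<^sub>s / P\<^sub>s\<close>, so \<open>u\<close> moves
  by at most \<open>H (P\<^sub>m - P\<^sub>i) / P\<^sub>i\<close> between rows \<open>i \<le> m\<close>. Given \<open>\<delta> > 0\<close>, pick \<open>k\<close> with
  \<open>(1 + \<delta>) P\<^sub>k \<le> P\<^sub>m < (1 + \<delta>) P\<^sub>k\<^sub>+\<^sub>1\<close> (possible because \<open>P\<^sub>m \<rightarrow> \<infinity>\<close>) and \<open>k'\<close> likewise for \<open>n\<close>.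
  On the rectangle \<open>(k, m] \<times> (k', n]\<close> every \<open>u\<^sub>i\<^sub>j\<close> is then within \<open>2 H \<delta>\<close> of \<open>u\<^sub>m\<^sub>n\<close>, while the
  \<open>p\<^sub>i q\<^sub>j\<close>-weighted average of \<open>u\<^sub>i\<^sub>j - \<ell>\<close> over the rectangle is an inclusion-exclusion of the four
  corner means \<open>\<sigma> - \<ell>\<close>, which is small relative to the rectangle weight because
  \<open>P\<^sub>m + P\<^sub>k \<le> (2 + \<delta>)/\<delta> (P\<^sub>m - P\<^sub>k)\<close>.
\<close>

lemma psum_pos: assumes "\<And>i. 0 < p i" shows "0 < psum p m"
  unfolding psum_def using assms by (intro sum_pos) auto

lemma psum_Suc: "psum p (Suc m) = psum p m + p (Suc m)"
  by (simp add: psum_def)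

lemma psum_mono: assumes "\<And>i. 0 < p i" "k \<le> m" shows "psum p k \<le> psum p m"
  unfolding psum_def using assms by (intro sum_mono2) (auto intro: less_imp_le)

lemma sum_greaterThanAtMost_eq_diff:
  fixes f :: "nat \<Rightarrow> 'a::ab_group_add"
  assumes "k \<le> m"
  shows "(\<Sum>i\<in>{k<..m}. f i) = (\<Sum>i\<le>m. f i) - (\<Sum>i\<le>k. f i)"
proof -
  have "(\<Sum>i\<le>m. f i) = (\<Sum>i\<le>k. f i) + (\<Sum>i\<in>{k<..m}. f i)"
    unfolding ivl_disj_un_one(3)[OF assms, symmetric] by (rule sum.union_disjoint) auto
  then show ?thesis by simp
qed

lemma sum_rectangle_eq_corners:
  fixes g :: "nat \<Rightarrow> nat \<Rightarrow> 'a::ab_group_add"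
  assumes "k \<le> m" "k' \<le> n"
  shows "(\<Sum>i\<in>{k<..m}. \<Sum>j\<in>{k'<..n}. g i j)
       = (\<Sum>i\<le>m. \<Sum>j\<le>n. g i j) - (\<Sum>i\<le>k. \<Sum>j\<le>n. g i j)
         - (\<Sum>i\<le>m. \<Sum>j\<le>k'. g i j) + (\<Sum>i\<le>k. \<Sum>j\<le>k'. g i j)"
  using assms by (simp add: sum_greaterThanAtMost_eq_diff sum_subtractf algebra_simps)

lemma norm_diff_le_by_psum_increment:
  fixes f :: "nat \<Rightarrow> 'a::real_normed_vector"
  assumes pos: "\<And>s. 0 < p s" and "i \<le> m" "0 \<le> H"
    and step: "\<And>s. i < s \<Longrightarrow> s \<le> m \<Longrightarrow> norm (f s - f (s - 1)) \<le> H * p s / psum p s"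
  shows "norm (f m - f i) \<le> H * (psum p m - psum p i) / psum p i"
proof -
  have "norm (f m - f i) = norm (\<Sum>s = i..<m. f (Suc s) - f s)"
    using sum_Suc_diff'[OF \<open>i \<le> m\<close>, of f] by simp
  also have "\<dots> \<le> (\<Sum>s = i..<m. norm (f (Suc s) - f s))"
    by (rule norm_sum)
  also have "\<dots> \<le> (\<Sum>s = i..<m. H * (psum p (Suc s) - psum p s) / psum p i)"
  proof (rule sum_mono)
    fix s assume s: "s \<in> {i..<m}"
    have "norm (f (Suc s) - f s) \<le> H * p (Suc s) / psum p (Suc s)"
      using step[of "Suc s"] s by simp
    also have "\<dots> \<le> H * p (Suc s) / psum p i"
      using s pos psum_pos[of p, OF pos] psum_mono[of p i "Suc s", OF pos] \<open>0 \<le> H\<close>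
      by (intro divide_left_mono) (auto intro: mult_nonneg_nonneg less_imp_le)
    finally show "norm (f (Suc s) - f s) \<le> H * (psum p (Suc s) - psum p s) / psum p i"
      by (simp add: psum_Suc)
  qed
  also have "\<dots> = H * (psum p m - psum p i) / psum p i"
    using sum_Suc_diff'[OF \<open>i \<le> m\<close>, of "psum p"]
    by (simp add: sum_divide_distrib[symmetric] sum_distrib_left[symmetric])
  finally show ?thesis .
qed

lemma exists_psum_bracket:
  assumes pos: "\<And>s. 0 < p s" and "1 < c" and "c * psum p N \<le> psum p m"
  shows "\<exists>k. N \<le> k \<and> k < m \<and> c * psum p k \<le> psum p m \<and> psum p m < c * psum p (Suc k)"
proof -
  define S where "S = {k. N \<le> k \<and> c * psum p k \<le> psum p m}"
  have "S \<subseteq> {..<m}"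
  proof
    fix k assume "k \<in> S"
    then have "c * psum p k \<le> psum p m"
      by (simp add: S_def)
    moreover have "psum p k < c * psum p k"
      using \<open>1 < c\<close> psum_pos[of p k, OF pos] by simp
    ultimately have "psum p k < psum p m"
      by linarith
    then show "k \<in> {..<m}"
      using psum_mono[of p m k, OF pos] by (cases "m \<le> k") auto
  qed
  then have "finite S"
    by (rule finite_subset) simp
  moreover have "N \<in> S"
    using assms(3) by (simp add: S_def)
  ultimately have "Max S \<in> S"
    by (intro Max_in) auto
  have "Suc (Max S) \<notin> S"
    using Max_ge[OF \<open>finite S\<close>, of "Suc (Max S)"] by auto
  with \<open>Max S \<in> S\<close> \<open>S \<subseteq> {..<m}\<close> show ?thesis
    by (auto simp: S_def intro!: exI[of _ "Max S"])
qed

lemma eventually_psum_bracket: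
  assumes pos: "\<And>s. 0 < p s" and lim: "filterlim (psum p) at_top sequentially" and "0 < \<delta>"
  shows "eventually (\<lambda>m. \<exists>k. K \<le> k \<and> k < m \<and> (1 + \<delta>) * psum p k \<le> psum p m
           \<and> psum p m < (1 + \<delta>) * psum p (Suc k)) sequentially"
proof -
  have "eventually (\<lambda>m. (1 + \<delta>) * psum p K \<le> psum p m) sequentially"
    using lim unfolding filterlim_at_top by blast
  then show ?thesis
    by (rule eventually_mono) (use exists_psum_bracket[OF pos] \<open>0 < \<delta>\<close> in auto)
qed

lemma wmean_deviation_eq:
  assumes "\<And>i. 0 < p i" "\<And>j. 0 < q j"
  shows "(\<Sum>i\<le>a. \<Sum>j\<le>b. of_real (p i * q j) * (u i j - l))
       = of_real (psum p a * psum q b) * (wmean p q u a b - l)"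
proof -
  have "psum p a * psum q b \<noteq> 0"
    using psum_pos[of p a, OF assms(1)] psum_pos[of q b, OF assms(2)] by simp
  have "(\<Sum>i\<le>a. \<Sum>j\<le>b. of_real (p i * q j) * (u i j - l))
      = (\<Sum>i\<le>a. \<Sum>j\<le>b. of_real (p i * q j) * u i j) - (\<Sum>i\<le>a. \<Sum>j\<le>b. of_real (p i * q j)) * l"
    by (simp add: algebra_simps sum_subtractf sum_distrib_right sum_distrib_left)
  also have "(\<Sum>i\<le>a. \<Sum>j\<le>b. of_real (p i * q j)) = (of_real (psum p a * psum q b) :: complex)"
    by (simp add: psum_def sum_product of_real_sum)
  finally show ?thesis
    using \<open>psum p a * psum q b \<noteq> 0\<close> by (simp add: wmean_def algebra_simps)
qed

lemma bracket_sum_le: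
  fixes x y \<delta> :: real
  assumes "0 < \<delta>" "(1 + \<delta>) * x \<le> y"
  shows "y + x \<le> (2 + \<delta>) / \<delta> * (y - x)"
  using assms by (simp add: field_simps)

lemma bracket_relative_increment_le:
  fixes x y \<delta> :: real
  assumes "0 < x" "y \<le> (1 + \<delta>) * x"
  shows "(y - x) / x \<le> \<delta>"
  using assms by (simp add: field_simps)

lemma bracket_product_le:
  fixes x y x' y' \<delta> :: real
  assumes "0 < \<delta>" "0 \<le> x" "0 \<le> x'" "(1 + \<delta>) * x \<le> y" "(1 + \<delta>) * x' \<le> y'"
  shows "(y + x) * (y' + x') \<le> ((2 + \<delta>) / \<delta>)\<^sup>2 * ((y - x) * (y' - x'))"
proof -
  have le: "y + x \<le> (2 + \<delta>) / \<delta> * (y - x)" "y' + x' \<le> (2 + \<delta>) / \<delta> * (y' - x')"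
    using assms(1,4,5) by (simp_all only: bracket_sum_le)
  have "x \<le> y" "x' \<le> y'"
    using assms(4,5) mult_nonneg_nonneg[OF less_imp_le[OF assms(1)] assms(2)]
      mult_nonneg_nonneg[OF less_imp_le[OF assms(1)] assms(3)]
    unfolding distrib_right by linarith+
  then have "(y + x) * (y' + x') \<le> ((2 + \<delta>) / \<delta> * (y - x)) * ((2 + \<delta>) / \<delta> * (y' - x'))"
    using le assms(1-3) by (intro mult_mono) auto
  then show ?thesis
    by (simp add: power2_eq_square algebra_simps)
qed

lemma norm_diff_le_in_bracket:
  fixes f :: "nat \<Rightarrow> 'a::real_normed_vector"
  assumes pos: "\<And>s. 0 < p s" and "0 \<le> H" "0 \<le> \<delta>" "k < i" "i \<le> m"
    and "psum p m \<le> (1 + \<delta>) * psum p (Suc k)"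
    and step: "\<And>s. i < s \<Longrightarrow> s \<le> m \<Longrightarrow> norm (f s - f (s - 1)) \<le> H * p s / psum p s"
  shows "norm (f m - f i) \<le> H * \<delta>"
proof -
  have "(1 + \<delta>) * psum p (Suc k) \<le> (1 + \<delta>) * psum p i"
    using \<open>0 \<le> \<delta>\<close> \<open>k < i\<close> psum_mono[of p "Suc k" i, OF pos] by (intro mult_left_mono) auto
  then have "(psum p m - psum p i) / psum p i \<le> \<delta>"
    using assms(6) psum_pos[of p i, OF pos] by (intro bracket_relative_increment_le) auto
  then have "H * ((psum p m - psum p i) / psum p i) \<le> H * \<delta>"
    using \<open>0 \<le> H\<close> by (rule mult_left_mono)
  moreover have "norm (f m - f i) \<le> H * (psum p m - psum p i) / psum p i"
    using pos \<open>i \<le> m\<close> \<open>0 \<le> H\<close> step by (rule norm_diff_le_by_psum_increment)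
  ultimately show ?thesis
    by simp
qed

lemma sum_block_weights:
  assumes "k \<le> m" "k' \<le> n"
  shows "(\<Sum>i\<in>{k<..m}. \<Sum>j\<in>{k'<..n}. p i * q j) = (psum p m - psum p k) * (psum q n - psum q k')"
proof -
  have "(\<Sum>i\<in>{k<..m}. p i) = psum p m - psum p k" "(\<Sum>j\<in>{k'<..n}. q j) = psum q n - psum q k'"
    using assms by (simp_all add: sum_greaterThanAtMost_eq_diff psum_def)
  then show ?thesis
    by (metis sum_product)
qed

lemma rectangle_decomposition:
  fixes u :: "nat \<Rightarrow> nat \<Rightarrow> complex" and l :: complex
  assumes pos: "\<And>i. 0 < p i" "\<And>j. 0 < q j" and "k \<le> m" "k' \<le> n"
  defines "D a b \<equiv> of_real (psum p a * psum q b) * (wmean p q u a b - l)"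
  shows "of_real ((psum p m - psum p k) * (psum q n - psum q k')) * (u m n - l)
       = (\<Sum>i\<in>{k<..m}. \<Sum>j\<in>{k'<..n}. of_real (p i * q j) * (u m n - u i j))
         + (D m n - D k n - D m k' + D k k')"
proof -
  have "D m n - D k n - D m k' + D k k'
      = (\<Sum>i\<in>{k<..m}. \<Sum>j\<in>{k'<..n}. of_real (p i * q j) * (u i j - l))"
    unfolding D_def wmean_deviation_eq[where p = p and q = q, OF pos, symmetric]
    using assms(3,4) by (rule sum_rectangle_eq_corners[symmetric])
  then have "(\<Sum>i\<in>{k<..m}. \<Sum>j\<in>{k'<..n}. of_real (p i * q j) * (u m n - u i j))
        + (D m n - D k n - D m k' + D k k')
      = (\<Sum>i\<in>{k<..m}. \<Sum>j\<in>{k'<..n}. of_real (p i * q j) * (u m n - l))"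
    by (simp add: sum.distrib[symmetric] algebra_simps)
  also have "\<dots> = of_real (\<Sum>i\<in>{k<..m}. \<Sum>j\<in>{k'<..n}. p i * q j) * (u m n - l)"
    by (simp add: sum_distrib_right)
  finally show ?thesis
    using sum_block_weights[OF assms(3,4)] by simp
qed

lemma norm_weighted_block_sum_le:
  fixes v :: "nat \<Rightarrow> nat \<Rightarrow> complex"
  assumes pos: "\<And>i. 0 < p i" "\<And>j. 0 < q j" and "k \<le> m" "k' \<le> n"
    and bound: "\<And>i j. i \<in> {k<..m} \<Longrightarrow> j \<in> {k'<..n} \<Longrightarrow> norm (v i j) \<le> c"
  shows "norm (\<Sum>i\<in>{k<..m}. \<Sum>j\<in>{k'<..n}. of_real (p i * q j) * v i j)
       \<le> (psum p m - psum p k) * (psum q n - psum q k') * c"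
proof -
  have "norm (\<Sum>i\<in>{k<..m}. \<Sum>j\<in>{k'<..n}. of_real (p i * q j) * v i j)
      \<le> (\<Sum>i\<in>{k<..m}. \<Sum>j\<in>{k'<..n}. p i * q j * c)"
    using bound pos by (intro order_trans[OF norm_sum sum_mono] order_trans[OF norm_sum sum_mono])
      (simp add: norm_mult abs_of_pos mult_left_mono)
  also have "\<dots> = (psum p m - psum p k) * (psum q n - psum q k') * c"
    using sum_block_weights[OF assms(3,4), of p q] by (simp add: sum_distrib_right[symmetric])
  finally show ?thesis .
qed

lemma norm_corner_deviations_le:
  fixes u :: "nat \<Rightarrow> nat \<Rightarrow> complex" and l :: complex
  assumes pos: "\<And>i. 0 < p i" "\<And>j. 0 < q j"
    and corners: "\<And>a b. a \<in> {k, m} \<Longrightarrow> b \<in> {k', n} \<Longrightarrow> norm (wmean p q u a b - l) \<le> \<epsilon>"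
  defines "D a b \<equiv> of_real (psum p a * psum q b) * (wmean p q u a b - l)"
  shows "norm (D m n - D k n - D m k' + D k k')
       \<le> \<epsilon> * ((psum p m + psum p k) * (psum q n + psum q k'))"
proof -
  have corner: "norm (D a b) \<le> \<epsilon> * (psum p a * psum q b)" if "a \<in> {k, m}" "b \<in> {k', n}" for a b
    using corners[OF that] psum_pos[of p a, OF pos(1)] psum_pos[of q b, OF pos(2)]
    by (simp add: D_def norm_mult abs_of_pos mult_left_mono mult.commute)
  show ?thesis
    using norm_triangle_ineq4[of "D m n - D k n" "D m k'"] norm_triangle_ineq4[of "D m n" "D k n"]
      norm_triangle_ineq[of "D m n - D k n - D m k'" "D k k'"] corner[of m n] corner[of k n]
      corner[of m k'] corner[of k k']
    by (simp add: algebra_simps)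
qed

lemma Tauberian_bracket_estimate:
  fixes u :: "nat \<Rightarrow> nat \<Rightarrow> complex" and l :: complex
  assumes pos: "\<And>i. 0 < p i" "\<And>j. 0 < q j" and "0 < \<delta>" "0 \<le> H" "0 \<le> \<epsilon>"
    and "k < m" "(1 + \<delta>) * psum p k \<le> psum p m" "psum p m \<le> (1 + \<delta>) * psum p (Suc k)"
    and "k' < n" "(1 + \<delta>) * psum q k' \<le> psum q n" "psum q n \<le> (1 + \<delta>) * psum q (Suc k')"
    and row: "\<And>s j. k < s \<Longrightarrow> k' < j \<Longrightarrow> norm (u s j - u (s - 1) j) \<le> H * p s / psum p s"
    and col: "\<And>i t. k < i \<Longrightarrow> k' < t \<Longrightarrow> norm (u i t - u i (t - 1)) \<le> H * q t / psum q t"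
    and corners: "\<And>a b. a \<in> {k, m} \<Longrightarrow> b \<in> {k', n} \<Longrightarrow> norm (wmean p q u a b - l) \<le> \<epsilon>"
  shows "norm (u m n - l) \<le> 2 * H * \<delta> + \<epsilon> * ((2 + \<delta>) / \<delta>)\<^sup>2"
proof -
  define A where "A = (psum p m - psum p k) * (psum q n - psum q k')"
  define S where "S = (\<Sum>i\<in>{k<..m}. \<Sum>j\<in>{k'<..n}. of_real (p i * q j) * (u m n - u i j))"
  define D where "D a b = of_real (psum p a * psum q b) * (wmean p q u a b - l)" for a b
  have "psum p k < psum p m" "psum q k' < psum q n"
    using assms(7,10) mult_pos_pos[OF \<open>0 < \<delta>\<close> psum_pos[of p k, OF pos(1)]]
      mult_pos_pos[OF \<open>0 < \<delta>\<close> psum_pos[of q k', OF pos(2)]]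
    unfolding distrib_right by linarith+
  then have "0 < A"
    by (simp add: A_def)
  have near: "norm (u m n - u i j) \<le> 2 * H * \<delta>" if "i \<in> {k<..m}" "j \<in> {k'<..n}" for i j
  proof -
    have "norm (u m j - u i j) \<le> H * \<delta>"
      using that pos(1) assms(3,4,8) row
      by (intro norm_diff_le_in_bracket[of p H \<delta> k i m "\<lambda>s. u s j"]) auto
    moreover have "norm (u m n - u m j) \<le> H * \<delta>"
      using that pos(2) assms(3,4,11) col
      by (intro norm_diff_le_in_bracket[of q H \<delta> k' j n "\<lambda>t. u m t"]) auto
    ultimately show ?thesis
      using norm_triangle_ineq[of "u m n - u m j" "u m j - u i j"] by simp
  qed
  have block: "norm S \<le> A * (2 * H * \<delta>)"
    unfolding S_def A_def using pos \<open>k < m\<close> \<open>k' < n\<close> near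
    by (intro norm_weighted_block_sum_le) auto
  have corners_bound: "norm (D m n - D k n - D m k' + D k k') \<le> \<epsilon> * (((2 + \<delta>) / \<delta>)\<^sup>2 * A)"
  proof -
    have "(psum p m + psum p k) * (psum q n + psum q k') \<le> ((2 + \<delta>) / \<delta>)\<^sup>2 * A"
      unfolding A_def using \<open>0 < \<delta>\<close> assms(7,10) psum_pos[of p k, OF pos(1)] psum_pos[of q k', OF pos(2)]
      by (intro bracket_product_le) auto
    then have "\<epsilon> * ((psum p m + psum p k) * (psum q n + psum q k')) \<le> \<epsilon> * (((2 + \<delta>) / \<delta>)\<^sup>2 * A)"
      using \<open>0 \<le> \<epsilon>\<close> by (rule mult_left_mono)
    with norm_corner_deviations_le[OF pos corners] show ?thesis
      unfolding D_def by (rule order_trans)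
  qed
  have "of_real A * (u m n - l) = S + (D m n - D k n - D m k' + D k k')"
    unfolding A_def S_def D_def using pos \<open>k < m\<close> \<open>k' < n\<close> by (intro rectangle_decomposition) auto
  then have "A * norm (u m n - l) = norm (S + (D m n - D k n - D m k' + D k k'))"
    using \<open>0 < A\<close> by (metis abs_of_pos norm_mult norm_of_real)
  also have "\<dots> \<le> norm S + norm (D m n - D k n - D m k' + D k k')"
    by (rule norm_triangle_ineq)
  also have "\<dots> \<le> A * (2 * H * \<delta>) + \<epsilon> * (((2 + \<delta>) / \<delta>)\<^sup>2 * A)"
    using block corners_bound by (rule add_mono)
  also have "\<dots> = A * (2 * H * \<delta> + \<epsilon> * ((2 + \<delta>) / \<delta>)\<^sup>2)"
    by (simp add: algebra_simps)
  finally have "A * norm (u m n - l) \<le> A * (2 * H * \<delta> + \<epsilon> * ((2 + \<delta>) / \<delta>)\<^sup>2)" .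
  then show ?thesis
    using \<open>0 < A\<close> by (rule mult_left_le_imp_le)
qed

lemma P_conv_of_wmean_Tauberian:
  fixes u :: "nat \<Rightarrow> nat \<Rightarrow> complex" and l :: complex
  assumes pos: "\<And>i. 0 < p i" "\<And>j. 0 < q j"
    and P_lim: "filterlim (psum p) at_top sequentially"
    and Q_lim: "filterlim (psum q) at_top sequentially"
    and wmean_conv: "P_conv (wmean p q u) l" and "0 < H"
    and row: "\<And>s j. N < s \<Longrightarrow> N < j \<Longrightarrow> norm (u s j - u (s - 1) j) \<le> H * p s / psum p s"
    and col: "\<And>i t. N < i \<Longrightarrow> N < t \<Longrightarrow> norm (u i t - u i (t - 1)) \<le> H * q t / psum q t"
  shows "P_conv u l"
  unfolding P_conv_def
proof (intro allI impI)
  fix e :: real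
  assume "0 < e"
  define \<delta> where "\<delta> = e / (8 * H)"
  define \<epsilon> where "\<epsilon> = e / (4 * ((2 + \<delta>) / \<delta>)\<^sup>2)"
  have "0 < \<delta>"
    using \<open>0 < e\<close> \<open>0 < H\<close> by (simp add: \<delta>_def)
  then have "0 < \<epsilon>"
    using \<open>0 < e\<close> by (simp add: \<epsilon>_def)
  have "2 * H * \<delta> = e / 4"
    using \<open>0 < H\<close> by (simp add: \<delta>_def)
  moreover have "\<epsilon> * ((2 + \<delta>) / \<delta>)\<^sup>2 = e / 4"
    using \<open>0 < \<delta>\<close> by (simp add: \<epsilon>_def)
  ultimately have small: "2 * H * \<delta> + \<epsilon> * ((2 + \<delta>) / \<delta>)\<^sup>2 < e"
    using \<open>0 < e\<close> by simp
  obtain L where L: "\<And>a b. L \<le> a \<Longrightarrow> L \<le> b \<Longrightarrow> norm (wmean p q u a b - l) < \<epsilon>"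
    using wmean_conv \<open>0 < \<epsilon>\<close> unfolding P_conv_def by blast
  define K where "K = max L N"
  obtain M
    where M_p: "\<And>m. M \<le> m \<Longrightarrow> \<exists>k. K \<le> k \<and> k < m \<and> (1 + \<delta>) * psum p k \<le> psum p m
             \<and> psum p m < (1 + \<delta>) * psum p (Suc k)"
      and M_q: "\<And>n. M \<le> n \<Longrightarrow> \<exists>k'. K \<le> k' \<and> k' < n \<and> (1 + \<delta>) * psum q k' \<le> psum q n
             \<and> psum q n < (1 + \<delta>) * psum q (Suc k')"
    using eventually_conj[OF eventually_psum_bracket[where K = K, OF pos(1) P_lim \<open>0 < \<delta>\<close>]
        eventually_psum_bracket[where K = K, OF pos(2) Q_lim \<open>0 < \<delta>\<close>]]
    unfolding eventually_sequentially by blast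
  show "\<exists>n0. \<forall>m n. n0 \<le> m \<and> n0 \<le> n \<longrightarrow> norm (u m n - l) < e"
  proof (intro exI allI impI)
    fix m n
    assume "M \<le> m \<and> M \<le> n"
    then obtain k k' where k: "K \<le> k" "k < m" "(1 + \<delta>) * psum p k \<le> psum p m" "psum p m < (1 + \<delta>) * psum p (Suc k)"
      and k': "K \<le> k'" "k' < n" "(1 + \<delta>) * psum q k' \<le> psum q n" "psum q n < (1 + \<delta>) * psum q (Suc k')"
      using M_p[of m] M_q[of n] by blast
    have "norm (wmean p q u a b - l) \<le> \<epsilon>" if "a \<in> {k, m}" "b \<in> {k', n}" for a b
      using L[of a b] that k k' by (auto simp: K_def)
    moreover have "N < s" if "k < s" for s
      using that k(1) by (simp add: K_def)
    moreover have "N < t" if "k' < t" for t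
      using that k'(1) by (simp add: K_def)
    ultimately have "norm (u m n - l) \<le> 2 * H * \<delta> + \<epsilon> * ((2 + \<delta>) / \<delta>)\<^sup>2"
      using pos \<open>0 < \<delta>\<close> \<open>0 < H\<close> \<open>0 < \<epsilon>\<close> k k' row col
      by (intro Tauberian_bracket_estimate[where p = p and q = q]) auto
    with small show "norm (u m n - l) < e"
      by linarith
  qed
qed

lemma double_bigO1_swap: "double_bigO1 (\<lambda>m n. a n m) \<longleftrightarrow> double_bigO1 a"
  unfolding double_bigO1_def by blast

lemma weighted_difference_bound_of_double_bigO1:
  fixes d :: "nat \<Rightarrow> nat \<Rightarrow> complex"
  assumes pos: "\<And>i. 0 < p i" and "double_bigO1 (\<lambda>m n. of_real (psum p m / p m) * d m n)"
  obtains H n0 where "0 < H" "\<And>m n. n0 \<le> m \<Longrightarrow> n0 \<le> n \<Longrightarrow> norm (d m n) \<le> H * p m / psum p m"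
proof -
  obtain H n0 where "0 < H" and H: "\<And>m n. n0 \<le> m \<Longrightarrow> n0 \<le> n \<Longrightarrow> norm (of_real (psum p m / p m) * d m n) \<le> H"
    using assms(2) unfolding double_bigO1_def by blast
  have "norm (d m n) \<le> H * p m / psum p m" if "n0 \<le> m" "n0 \<le> n" for m n
  proof -
    have "psum p m / p m * norm (d m n) \<le> H"
      using H[OF that] pos[of m] psum_pos[of p m, OF pos] unfolding norm_mult norm_of_real by simp
    then show ?thesis
      using pos[of m] psum_pos[of p m, OF pos] by (simp add: field_simps)
  qed
  with \<open>0 < H\<close> show ?thesis
    by (rule that)
qed

theorem P_conv_of_Nbar_summable_Tauberian:
  assumes "weight_seq p" "weight_seq q" "Nbar_summable p q u l"
    and "double_bigO1 (\<lambda>m n. of_real (psum p m / p m) * Delta10 u m n)"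
    and "double_bigO1 (\<lambda>m n. of_real (psum q n / q n) * Delta01 u m n)"
  shows "P_conv u l"
proof -
  have pos: "\<And>i. 0 < p i" "\<And>j. 0 < q j"
    and lim: "filterlim (psum p) at_top sequentially" "filterlim (psum q) at_top sequentially"
    using assms(1,2) by (auto simp: weight_seq_def)
  obtain H1 n1 where "0 < H1"
    and H1: "\<And>m n. n1 \<le> m \<Longrightarrow> n1 \<le> n \<Longrightarrow> norm (Delta10 u m n) \<le> H1 * p m / psum p m"
    using weighted_difference_bound_of_double_bigO1[where p = p, OF pos(1) assms(4)] by blast
  obtain H2 n2 where H2: "\<And>n m. n2 \<le> n \<Longrightarrow> n2 \<le> m \<Longrightarrow> norm (Delta01 u m n) \<le> H2 * q n / psum q n"
    using weighted_difference_bound_of_double_bigO1[where d = "\<lambda>n m. Delta01 u m n", OF pos(2)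
        double_bigO1_swap[THEN iffD2, OF assms(5)]] by blast
  define H where "H = max H1 H2"
  have "0 < H"
    using \<open>0 < H1\<close> by (simp add: H_def)
  have weight_mono: "c * w i / psum w i \<le> H * w i / psum w i" if "c \<le> H" "\<And>i. 0 < w i" for c w i
    using that psum_pos[of w i] by (intro divide_right_mono mult_right_mono) (auto intro: less_imp_le)
  have row: "norm (u s j - u (s - 1) j) \<le> H * p s / psum p s" if "max n1 n2 < s" "max n1 n2 < j" for s j
    using H1[of s j] that weight_mono[of H1 p s] pos by (simp add: Delta10_def H_def)
  have col: "norm (u i t - u i (t - 1)) \<le> H * q t / psum q t" if "max n1 n2 < i" "max n1 n2 < t" for i t
    using H2[of t i] that weight_mono[of H2 q t] pos by (simp add: Delta01_def H_def)
  show ?thesis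
    using pos lim assms(3) \<open>0 < H\<close> row col unfolding Nbar_summable_def
    by (rule P_conv_of_wmean_Tauberian)
qed

theorem theorem5p2:
  fixes p q :: "nat \<Rightarrow> real" and u :: "nat \<Rightarrow> nat \<Rightarrow> complex" and l :: complex and \<alpha> :: real
  assumes "\<alpha> \<ge> 0"
    and "weight_seq p" and "weight_seq q"
    and "p \<in> SVA_reg \<alpha>" and "q \<in> SVA_reg \<alpha>"
    and "Nbar_summable p q u l"
    and "double_bigO1 (\<lambda>m n. of_real (psum p m / p m) * Delta10 u m n)"
    and "double_bigO1 (\<lambda>m n. of_real (psum q n / q n) * Delta01 u m n)"
  shows "P_conv u l"
  using assms(2,3,6-8) by (rule P_conv_of_Nbar_summable_Tauberian)

end
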